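(* Let $t \geq 4$ and $n \geq 1$ be integers, let $t' = [t/2]$, $x = \left[\frac{nt'-1}{t'-1}\right]$, and write $x-2 = tq + r$ with integers $q$ and $0 \leq r \leq t-1$. Let $R = R_{t-2,t}(K_{1,n})$. Then $R = x-1$ if and only if one of the following conditions holds: (a) $r = 1$, $\frac{2q+9}{3} < t \leq q+4$, $t$ is odd, and $x$ is even; (b) $r = 1$, $\frac{2q+9}{3} < t \leq q+4$, $t$ is odd, and $x$ is odd; (c) $1 < r < t-2$ and $\frac{2q+2r+7}{3} < t \leq q+r+3$ and $t$ is odd; (d) $r = t-2$ and either $t$ is even, or $t$ is odd and $t > \frac{2q+2r+7}{3}$.
   Context: $[a]$ denotes the integer part (floor) of a real number $a$. $K_{1,n}$ is the star with $n$ edges. For a graph $G$ and integers $1 \leq s < t$, $R_{s,t}(G)$ is the smallest positive integer $N$ such that every coloring of the edges of the complete graph $K_N$ with $t$ colors contains a (not necessarily induced) subgraph isomorphic to $G$ whose edges use at most $s$ distinct colors. *)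

theory Defs
  imports Main
begin

text \<open>An edge colouring of K_N (vertices 0..N-1) is a function c on 2-subsets of {..<N}.\<close>

definition has_copy_few_colors ::
  "nat \<Rightarrow> (nat set \<Rightarrow> nat) \<Rightarrow> nat \<Rightarrow> 'a set \<Rightarrow> 'a set set \<Rightarrow> bool" where
  "has_copy_few_colors N c s V E \<longleftrightarrow>
     (\<exists>f. inj_on f V \<and> f ` V \<subseteq> {..<N} \<and> card ((\<lambda>e. c (f ` e)) ` E) \<le> s)"

definition ramsey_st :: "nat \<Rightarrow> nat \<Rightarrow> 'a set \<Rightarrow> 'a set set \<Rightarrow> nat" where
  "ramsey_st s t V E = (LEAST N. 0 < N \<and>
     (\<forall>c :: nat set \<Rightarrow> nat. (\<forall>e. e \<subseteq> {..<N} \<and> card e = 2 \<longrightarrow> c e < t)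
        \<longrightarrow> has_copy_few_colors N c s V E))"

definition star_V :: "nat \<Rightarrow> nat set" where
  "star_V n = {..n}"

definition star_E :: "nat \<Rightarrow> nat set set" where
  "star_E n = {{0, i} | i. i \<in> {1..n}}"

end

theory Submission
  imports Defs "HOL-Number_Theory.Cong"
begin

text \<open>Write \<open>n - 1 = (t - 2) a + b\<close> with \<open>0 \<le> b < t - 2\<close>. Among the \<open>t\<close> colour classes at a vertex
  of \<open>K_N\<close>, the \<open>t - 2\<close> heaviest ones contain at least \<open>n\<close> edges as soon as \<open>N = t a + b + 2\<close>,
  so \<open>R \<le> t a + b + 2\<close>. For \<open>N = t a + b + 1\<close> a colouring in which at every vertex every
  two colour classes are large leaves no room for a star with \<open>n\<close> edges in \<open>t - 2\<close> colours;
  such colourings come from a 1-factorisation of \<open>K_N\<close> or \<open>K_{N-1}\<close> (colours reduced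
  mod \<open>t\<close>) or from the cyclic distance on an odd cycle. This shows \<open>R = t a + b + 2\<close>, except
  when \<open>b = 0\<close>, \<open>a\<close> is odd and \<open>t\<close> is even, where still \<open>R > t a\<close>.
  The rest is arithmetic: \<open>x = n + (n - 1) div (t' - 1)\<close>, which for even \<open>t\<close> is never \<open>R + 1\<close>
  (and then \<open>r \<noteq> t - 2\<close>), while for odd \<open>t\<close> it equals \<open>R + 1\<close> exactly when
  \<open>2 (t' - 1) \<le> a + b < 3 (t' - 1)\<close>, which translates into the stated conditions on \<open>q\<close> and \<open>r\<close>.\<close>

section \<open>Stars with few colours at a vertex\<close>

definition star_arrows :: "nat \<Rightarrow> nat \<Rightarrow> nat \<Rightarrow> nat \<Rightarrow> bool" where
  "star_arrows s t n N \<longleftrightarrow> (\<forall>c :: nat set \<Rightarrow> nat.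
     (\<forall>e. e \<subseteq> {..<N} \<and> card e = 2 \<longrightarrow> c e < t) \<longrightarrow> has_copy_few_colors N c s (star_V n) (star_E n))"

lemma ramsey_st_star_eq_Least:
  "ramsey_st s t (star_V n) (star_E n) = (LEAST N. 0 < N \<and> star_arrows s t n N)"
  unfolding ramsey_st_def star_arrows_def ..

lemma star_arrows_mono:
  assumes "star_arrows s t n N" "N \<le> N'"
  shows "star_arrows s t n N'"
  unfolding star_arrows_def
proof (intro allI impI)
  fix c :: "nat set \<Rightarrow> nat"
  assume "\<forall>e. e \<subseteq> {..<N'} \<and> card e = 2 \<longrightarrow> c e < t"
  then have "\<forall>e. e \<subseteq> {..<N} \<and> card e = 2 \<longrightarrow> c e < t"
    using assms(2) by (meson lessThan_subset_iff subset_trans)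
  then have "has_copy_few_colors N c s (star_V n) (star_E n)"
    using assms(1) unfolding star_arrows_def by blast
  then show "has_copy_few_colors N' c s (star_V n) (star_E n)"
    unfolding has_copy_few_colors_def using assms(2) by (meson lessThan_subset_iff subset_trans)
qed

lemma ramsey_st_star_bounds:
  assumes "star_arrows s t n N" "0 < N" "\<not> star_arrows s t n N'"
  shows "N' < ramsey_st s t (star_V n) (star_E n)" "ramsey_st s t (star_V n) (star_E n) \<le> N"
proof -
  let ?R = "LEAST N. 0 < N \<and> star_arrows s t n N"
  have R: "0 < ?R \<and> star_arrows s t n ?R"
    by (rule LeastI[of _ N]) (use assms in simp)
  show "N' < ramsey_st s t (star_V n) (star_E n)"
    unfolding ramsey_st_star_eq_Least using R assms(3) star_arrows_mono by (meson not_less)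
  show "ramsey_st s t (star_V n) (star_E n) \<le> N"
    unfolding ramsey_st_star_eq_Least by (rule Least_le) (use assms in simp)
qed

lemma has_copy_few_colors_starD:
  assumes "has_copy_few_colors N c s (star_V n) (star_E n)"
  obtains v S where "v < N" "finite S" "card S \<le> s" "n \<le> card {u \<in> {..<N} - {v}. c {v, u} \<in> S}"
proof -
  obtain f where f: "inj_on f {..n}" "f ` {..n} \<subseteq> {..<N}"
    and card_S: "card ((\<lambda>e. c (f ` e)) ` star_E n) \<le> s"
    using assms unfolding has_copy_few_colors_def star_V_def by blast
  define S where "S = (\<lambda>e. c (f ` e)) ` star_E n"
  have leaves: "f ` {1..n} \<subseteq> {u \<in> {..<N} - {f 0}. c {f 0, u} \<in> S}"
  proof
    fix u assume "u \<in> f ` {1..n}"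
    then obtain i where i: "i \<in> {1..n}" "u = f i" by auto
    then have "{0, i} \<in> star_E n" unfolding star_E_def by blast
    moreover have "f 0 \<noteq> u" using f(1) i unfolding inj_on_def by force
    ultimately show "u \<in> {u \<in> {..<N} - {f 0}. c {f 0, u} \<in> S}"
      using f(2) i unfolding S_def by force
  qed
  have "n = card (f ` {1..n})"
    using card_image[OF inj_on_subset[OF f(1)]] by auto
  also have "\<dots> \<le> card {u \<in> {..<N} - {f 0}. c {f 0, u} \<in> S}"
    by (rule card_mono[OF _ leaves]) simp
  finally have "n \<le> card {u \<in> {..<N} - {f 0}. c {f 0, u} \<in> S}" .
  moreover have "finite S" "f 0 < N" using f(2) unfolding S_def star_E_def by auto
  ultimately show ?thesis using that card_S unfolding S_def by blast
qed

lemma has_copy_few_colors_starI: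
  assumes v: "v < N" and S: "finite S" "card S \<le> s"
    and many: "n \<le> card {u \<in> {..<N} - {v}. c {v, u} \<in> S}"
  shows "has_copy_few_colors N c s (star_V n) (star_E n)"
proof -
  obtain L where L: "L \<subseteq> {u \<in> {..<N} - {v}. c {v, u} \<in> S}" "card L = n"
    using many by (meson obtain_subset_with_card_n)
  then obtain g where g: "bij_betw g {1..n} L"
    using ex_bij_betw_nat_finite_1[of L] finite_subset[OF L(1)] by auto
  define f where "f i = (if i = 0 then v else g i)" for i
  have leaf: "f i \<in> L" if "i \<in> {1..n}" for i
    using g that unfolding f_def bij_betw_def by auto
  have "inj_on f {..n}"
  proof (rule inj_onI)
    fix i j assume "i \<in> {..n}" "j \<in> {..n}" "f i = f j"
    moreover have "f i \<noteq> v" if "i \<in> {1..n}" for i using leaf[OF that] L(1) by auto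
    ultimately show "i = j"
      using bij_betw_imp_inj_on[OF g] unfolding f_def inj_on_def
      by (metis atLeastAtMost_iff atMost_iff less_one linorder_not_le)
  qed
  moreover have "f ` {..n} \<subseteq> {..<N}"
  proof (rule image_subsetI)
    fix i assume "i \<in> {..n}"
    then show "f i \<in> {..<N}" using leaf[of i] L(1) v by (cases "i = 0") (auto simp: f_def)
  qed
  moreover have "(\<lambda>e. c (f ` e)) ` star_E n \<subseteq> S"
  proof
    fix y assume "y \<in> (\<lambda>e. c (f ` e)) ` star_E n"
    then obtain i where i: "i \<in> {1..n}" "y = c (f ` {0, i})" unfolding star_E_def by auto
    then have "f ` {0, i} = {v, f i}" unfolding f_def by auto
    then show "y \<in> S" using leaf[OF i(1)] L(1) i(2) by auto
  qed
  then have "card ((\<lambda>e. c (f ` e)) ` star_E n) \<le> s" using S by (meson card_mono order_trans)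
  ultimately show ?thesis unfolding has_copy_few_colors_def star_V_def by blast
qed

lemma diff_two_mult_add: "2 \<le> t \<Longrightarrow> (t - 2) * a + 2 * a = (t :: nat) * a"
  using mult_le_mono1[of 2 t a] by (simp add: diff_mult_distrib)

lemma card_preimage_eq_sum:
  assumes "finite X" "finite K"
  shows "card {u \<in> X. g u \<in> K} = (\<Sum>k\<in>K. card {u \<in> X. g u = k})"
proof -
  have "{u \<in> X. g u \<in> K} = (\<Union>k\<in>K. {u \<in> X. g u = k})" by auto
  moreover have "card (\<Union>k\<in>K. {u \<in> X. g u = k}) = (\<Sum>k\<in>K. card {u \<in> X. g u = k})"
    by (rule card_UN_disjoint) (use assms in auto)
  ultimately show ?thesis by simp
qed

lemma exists_heavy_colour_classes:
  fixes w :: "nat \<Rightarrow> nat"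
  assumes b: "b < t - 2" and total: "t * a + b < (\<Sum>k<t. w k)"
  shows "\<exists>S \<subseteq> {..<t}. card S = t - 2 \<and> (t - 2) * a + b < (\<Sum>k\<in>S. w k)"
proof -
  have "2 < t" using b by simp
  obtain k1 where k1: "k1 < t" "\<And>k. k < t \<Longrightarrow> w k1 \<le> w k"
    using ex_is_arg_min_if_finite[of "{..<t}" w] \<open>2 < t\<close> unfolding is_arg_min_linorder by fastforce
  have "(if k1 = 0 then 1 else 0) \<in> {..<t} - {k1}" using \<open>2 < t\<close> by auto
  then obtain k2 where "is_arg_min w (\<lambda>k. k \<in> {..<t} - {k1}) k2"
    using ex_is_arg_min_if_finite[of "{..<t} - {k1}" w] by blast
  then have k2: "k2 < t" "k2 \<noteq> k1" "\<And>k. k < t \<Longrightarrow> k \<noteq> k1 \<Longrightarrow> w k2 \<le> w k"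
    unfolding is_arg_min_linorder by auto
  define S where "S = {..<t} - {k1, k2}"
  have card_S: "card S = t - 2" unfolding S_def using k1 k2 by (simp add: card_Diff_subset)
  have sum_split: "(\<Sum>k<t. w k) = w k1 + w k2 + (\<Sum>k\<in>S. w k)"
    unfolding S_def using k1(1) k2(1,2)
    by (simp add: sum.remove Diff_insert2[symmetric] insert_commute)
  have "(t - 2) * a + b < (\<Sum>k\<in>S. w k)"
  proof (rule ccontr)
    assume small: "\<not> ?thesis"
    \<comment> \<open>the rest outweighs \<open>t - 2\<close> copies of the second lightest class, so both dropped ones weigh at most \<open>a\<close>\<close>
    have "(t - 2) * w k2 \<le> (\<Sum>k\<in>S. w k)"
      using sum_mono[of S "\<lambda>_. w k2" w] k2(3) card_S unfolding S_def by auto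
    moreover have "(t - 2) * (a + 1) = (t - 2) * a + (t - 2)" by simp
    ultimately have "(t - 2) * w k2 < (t - 2) * (a + 1)" using small b by linarith
    then have "w k2 < a + 1" by (rule mult_left_less_imp_less) simp
    then have "w k2 \<le> a" by simp
    moreover have "w k1 \<le> w k2" using k1(2)[OF k2(1)] .
    ultimately have "(\<Sum>k<t. w k) \<le> 2 * a + ((t - 2) * a + b)" using sum_split small by linarith
    also have "\<dots> = t * a + b" using diff_two_mult_add[of t a] \<open>2 < t\<close> by simp
    finally show False using total by simp
  qed
  moreover have "S \<subseteq> {..<t}" unfolding S_def by blast
  ultimately show ?thesis using card_S by blast
qed

lemma star_arrows_upper:
  assumes n: "n = (t - 2) * a + b + 1" and b: "b < t - 2"
  shows "star_arrows (t - 2) t n (t * a + b + 2)"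
  unfolding star_arrows_def
proof (intro allI impI)
  let ?N = "t * a + b + 2"
  fix c :: "nat set \<Rightarrow> nat"
  assume col: "\<forall>e. e \<subseteq> {..<?N} \<and> card e = 2 \<longrightarrow> c e < t"
  define X where "X = {..<?N} - {0}"
  define w where "w k = card {u \<in> X. c {0, u} = k}" for k
  have "{u \<in> X. c {0, u} \<in> {..<t}} = X" using col by (auto simp: X_def)
  then have "(\<Sum>k<t. w k) = t * a + b + 1"
    using card_preimage_eq_sum[of X "{..<t}" "\<lambda>u. c {0, u}"] by (simp add: w_def X_def)
  then obtain S where S: "S \<subseteq> {..<t}" "card S = t - 2" and heavy: "(t - 2) * a + b < (\<Sum>k\<in>S. w k)"
    using exists_heavy_colour_classes[OF b, of a w] by auto
  have "finite S" using S(1) finite_subset by blast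
  then have "n \<le> card {u \<in> X. c {0, u} \<in> S}"
    using heavy card_preimage_eq_sum[of X S "\<lambda>u. c {0, u}"] n by (simp add: w_def X_def)
  then show "has_copy_few_colors ?N c (t - 2) (star_V n) (star_E n)"
    using has_copy_few_colors_starI[of 0 ?N S "t - 2" n c] S \<open>finite S\<close> by (simp add: X_def)
qed

section \<open>Lower bound constructions\<close>

lemma not_star_arrows_if_colour_pairs_large:
  fixes g :: "nat \<Rightarrow> nat \<Rightarrow> nat"
  assumes t: "2 \<le> t" and sym: "\<And>u v. g u v = g v u" and range: "\<And>u v. g u v < t"
    and large: "\<And>v k1 k2. v < N \<Longrightarrow> k1 < t \<Longrightarrow> k2 < t \<Longrightarrow> k1 \<noteq> k2 \<Longrightarrow>
        B \<le> card {u \<in> {..<N} - {v}. g v u = k1} + card {u \<in> {..<N} - {v}. g v u = k2}"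
    and N: "N \<le> n + B"
  shows "\<not> star_arrows (t - 2) t n N"
proof
  define c where "c e = g (Min e) (Max e)" for e :: "nat set"
  have c_pair: "c {v, u} = g v u" for v u
    using sym[of u v] by (cases "v \<le> u") (auto simp: c_def max_def min_def)
  assume "star_arrows (t - 2) t n N"
  moreover have "\<forall>e. e \<subseteq> {..<N} \<and> card e = 2 \<longrightarrow> c e < t" using range by (simp add: c_def)
  ultimately have "has_copy_few_colors N c (t - 2) (star_V n) (star_E n)"
    unfolding star_arrows_def by blast
  then obtain v S where v: "v < N" and S: "finite S" "card S \<le> t - 2"
    and "n \<le> card {u \<in> {..<N} - {v}. c {v, u} \<in> S}"
    by (rule has_copy_few_colors_starD)
  then have many: "n \<le> card {u \<in> {..<N} - {v}. g v u \<in> S}" by (simp add: c_pair)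
  \<comment> \<open>the star avoids two colours, and at \<open>v\<close> their classes alone leave fewer than \<open>n\<close> other edges.\<close>
  have "card ({..<t} - S) \<ge> 2"
    using card_mono[OF S(1), of "S \<inter> {..<t}"] S(2) t
    by (simp add: card_Diff_subset_Int Int_commute)
  then obtain D where "D \<subseteq> {..<t} - S" "card D = 2" by (meson obtain_subset_with_card_n)
  then obtain k1 k2 where k: "k1 < t" "k2 < t" "k1 \<noteq> k2" "k1 \<notin> S" "k2 \<notin> S"
    by (auto simp: card_2_iff)
  define X where "X = {..<N} - {v}"
  define Y where "Y = {u \<in> X. g v u \<in> S}"
  define A1 where "A1 = {u \<in> X. g v u = k1}"
  define A2 where "A2 = {u \<in> X. g v u = k2}"
  have "card Y + card A1 + card A2 = card (Y \<union> A1 \<union> A2)"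
    using k unfolding Y_def A1_def A2_def X_def by (subst card_Un_disjoint; auto)+
  also have "\<dots> \<le> card X" by (rule card_mono) (auto simp: X_def Y_def A1_def A2_def)
  also have "\<dots> = N - 1" using v by (simp add: X_def)
  finally show False using many large[OF v k(1-3)] N v unfolding X_def Y_def A1_def A2_def by linarith
qed

lemma card_residue_class_ge:
  assumes "k < t"
  shows "M div t + (if k < M mod t then 1 else 0) \<le> card {i. i < M \<and> i mod t = k}"
proof -
  define K where "K = M div t + (if k < M mod t then 1 else 0)"
  have "(\<lambda>j. j * t + k) ` {..<K} \<subseteq> {i. i < M \<and> i mod t = k}"
  proof (rule image_subsetI)
    fix j assume "j \<in> {..<K}"
    then have "j < M div t \<or> (j = M div t \<and> k < M mod t)" by (auto simp: K_def split: if_splits)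
    then have "j * t + k < M"
    proof
      assume "j < M div t"
      then have "(j + 1) * t \<le> M div t * t" by (intro mult_le_mono1) simp
      moreover have "M div t * t \<le> M" "(j + 1) * t = j * t + t" by simp_all
      ultimately show ?thesis using assms by linarith
    next
      assume "j = M div t \<and> k < M mod t"
      then show ?thesis by (metis add_less_cancel_left div_mult_mod_eq)
    qed
    then show "j * t + k \<in> {i. i < M \<and> i mod t = k}" using assms by simp
  qed
  then have "card ((\<lambda>j. j * t + k) ` {..<K}) \<le> card {i. i < M \<and> i mod t = k}"
    by (intro card_mono) simp_all
  moreover have "inj_on (\<lambda>j. j * t + k) {..<K}" using assms by (auto simp: inj_on_def)
  ultimately show ?thesis using card_image unfolding K_def by fastforce
qed

lemma div_le_card_residue_class: "k < t \<Longrightarrow> M div t \<le> card {i. i < M \<and> i mod t = k}"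
  using card_residue_class_ge[of k t M] by linarith

text \<open>For odd \<open>M\<close> this is the classical factorisation of \<open>K_{M+1}\<close> into \<open>M\<close> perfect matchings,
  with vertex \<open>M\<close> as the point at infinity: every vertex sees every colour exactly once.\<close>

definition pair_colour :: "nat \<Rightarrow> nat \<Rightarrow> nat \<Rightarrow> nat" where
  "pair_colour M v u =
     (if v = M then 2 * u mod M else if u = M then 2 * v mod M else (v + u) mod M)"

lemma pair_colour_commute: "pair_colour M v u = pair_colour M u v"
  unfolding pair_colour_def by (auto simp: add.commute)

lemma inj_on_pair_colour:
  assumes M: "odd M" and v: "v \<le> M"
  shows "inj_on (pair_colour M v) ({..M} - {v})"
proof (rule inj_onI)
  have cancel: "u = u'" if "[w + u = w + u'] (mod M)" "u < M" "u' < M" for w u u'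
    using that by (metis cong_add_lcancel_nat cong_def mod_less)
  fix u u' assume u: "u \<in> {..M} - {v}" and u': "u' \<in> {..M} - {v}"
    and eq: "pair_colour M v u = pair_colour M v u'"
  consider "v = M" | "v < M" "u = M \<or> u' = M" "u \<noteq> u'" | "v < M" "u < M" "u' < M" | "u = u'"
    using u u' v by fastforce
  then show "u = u'"
  proof cases
    case 1
    then have "[2 * u = 2 * u'] (mod M)" "u < M" "u' < M" using eq u u' by (auto simp: pair_colour_def cong_def)
    then show ?thesis using cong_mult_lcancel_nat[of 2 M u u'] M by (simp add: cong_def)
  next
    case 2
    then have "\<exists>w \<in> {u, u'}. w < M \<and> w \<noteq> v \<and> pair_colour M v w = pair_colour M v M"
      using u u' eq by auto
    then show ?thesis using cancel[of v _ v] 2 by (auto simp: pair_colour_def cong_def mult_2)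
  next
    case 3
    then show ?thesis using cancel[of v u u'] eq u u' by (simp add: pair_colour_def cong_def)
  qed simp
qed

lemma bij_betw_pair_colour:
  assumes "odd M" "v \<le> M"
  shows "bij_betw (pair_colour M v) ({..M} - {v}) {..<M}"
proof -
  have "pair_colour M v ` ({..M} - {v}) \<subseteq> {..<M}"
    using odd_pos[OF assms(1)] by (auto simp: pair_colour_def)
  moreover have "card (pair_colour M v ` ({..M} - {v})) = M"
    using card_image[OF inj_on_pair_colour[OF assms]] assms(2) by simp
  ultimately show ?thesis
    using inj_on_pair_colour[OF assms] card_subset_eq[of "{..<M}"] by (simp add: bij_betw_def)
qed

lemma card_pair_colour_class:
  assumes "odd M" "v \<le> M"
  shows "card {u \<in> {..M} - {v}. P (pair_colour M v u)} = card {i. i < M \<and> P i}"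
  using bij_betw_same_card[OF bij_betw_Collect[OF bij_betw_pair_colour[OF assms],
        where P = "\<lambda>u. P (pair_colour M v u)" and Q = P]]
  by (simp add: lessThan_def)

definition apex_pair_colour :: "nat \<Rightarrow> nat \<Rightarrow> nat \<Rightarrow> nat" where
  "apex_pair_colour M v u =
     (if v = Suc M then u else if u = Suc M then v else pair_colour M v u)"

lemma apex_pair_colour_commute: "apex_pair_colour M v u = apex_pair_colour M u v"
  unfolding apex_pair_colour_def using pair_colour_commute by auto

lemma card_apex_pair_colour_class_ge:
  assumes "odd M" "v \<le> Suc M"
  shows "card {i. i < M \<and> P i} \<le> card {u \<in> {..Suc M} - {v}. P (apex_pair_colour M v u)}"
proof (cases "v = Suc M")
  case True
  then have "{i. i < M \<and> P i} \<subseteq> {u \<in> {..Suc M} - {v}. P (apex_pair_colour M v u)}"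
    by (auto simp: apex_pair_colour_def)
  then show ?thesis by (intro card_mono) simp_all
next
  case False
  then have "{u \<in> {..M} - {v}. P (pair_colour M v u)} \<subseteq> {u \<in> {..Suc M} - {v}. P (apex_pair_colour M v u)}"
    by (auto simp: apex_pair_colour_def)
  have "card {i. i < M \<and> P i} = card {u \<in> {..M} - {v}. P (pair_colour M v u)}"
    using card_pair_colour_class[OF assms(1), of v P] False assms(2) by simp
  also have "\<dots> \<le> card {u \<in> {..Suc M} - {v}. P (apex_pair_colour M v u)}"
    using \<open>_ \<subseteq> _\<close> by (intro card_mono) simp_all
  finally show ?thesis .
qed

definition cyclic_distance :: "nat \<Rightarrow> nat \<Rightarrow> nat \<Rightarrow> nat" where
  "cyclic_distance N v u = (let d = if v \<le> u then u - v else v - u in min d (N - d))"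

lemma cyclic_distance_commute: "cyclic_distance N v u = cyclic_distance N u v"
  unfolding cyclic_distance_def Let_def by auto

lemma card_cyclic_distance_class_ge:
  assumes N: "N = 2 * H + 1" and v: "v < N"
  shows "2 * card {i. i < H \<and> P i} \<le> card {u \<in> {..<N} - {v}. P (cyclic_distance N v u - 1)}"
proof -
  define I where "I = {i. i < H \<and> P i}"
  define cw where "cw i = (if v + i + 1 < N then v + i + 1 else v + i + 1 - N)" for i
  define ccw where "ccw i = (if i + 1 \<le> v then v - (i + 1) else v + N - (i + 1))" for i
  have "cw i < N \<and> cw i \<noteq> v \<and> cyclic_distance N v (cw i) = i + 1" if "i < H" for i
    using that N v unfolding cw_def cyclic_distance_def Let_def by (auto simp: min_def)
  moreover have "ccw i < N \<and> ccw i \<noteq> v \<and> cyclic_distance N v (ccw i) = i + 1" if "i < H" for i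
    using that N v unfolding ccw_def cyclic_distance_def Let_def by (auto simp: min_def)
  ultimately have "cw ` I \<union> ccw ` I \<subseteq> {u \<in> {..<N} - {v}. P (cyclic_distance N v u - 1)}"
    unfolding I_def by auto
  then have "card (cw ` I \<union> ccw ` I) \<le> card {u \<in> {..<N} - {v}. P (cyclic_distance N v u - 1)}"
    by (intro card_mono) simp_all
  moreover have "card (cw ` I \<union> ccw ` I) = 2 * card I"
  proof -
    have "inj_on cw I" "inj_on ccw I" "cw ` I \<inter> ccw ` I = {}"
      using N v unfolding I_def cw_def ccw_def inj_on_def by auto
    then show ?thesis by (simp add: card_Un_disjoint card_image I_def)
  qed
  ultimately show ?thesis unfolding I_def by simp
qed

lemma not_star_arrows_pair_colour:
  assumes t: "2 \<le> t" and M: "odd M"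
    and classes: "\<And>k1 k2. k1 < t \<Longrightarrow> k2 < t \<Longrightarrow> k1 \<noteq> k2 \<Longrightarrow>
        B \<le> card {i. i < M \<and> i mod t = k1} + card {i. i < M \<and> i mod t = k2}"
    and N: "Suc M \<le> n + B"
  shows "\<not> star_arrows (t - 2) t n (Suc M)"
proof (rule not_star_arrows_if_colour_pairs_large[OF t _ _ _ N])
  show "pair_colour M u v mod t = pair_colour M v u mod t" for u v
    using pair_colour_commute by metis
  show "pair_colour M u v mod t < t" for u v using t by simp
  fix v k1 k2 assume "v < Suc M" "k1 < t" "k2 < t" "k1 \<noteq> k2"
  then show "B \<le> card {u \<in> {..<Suc M} - {v}. pair_colour M v u mod t = k1}
      + card {u \<in> {..<Suc M} - {v}. pair_colour M v u mod t = k2}"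
    using classes[of k1 k2] card_pair_colour_class[OF M, of v "\<lambda>i. i mod t = k1"]
      card_pair_colour_class[OF M, of v "\<lambda>i. i mod t = k2"] by (simp add: lessThan_Suc_atMost)
qed

lemma not_star_arrows_apex_pair_colour:
  assumes t: "2 \<le> t" and M: "odd M" and N: "Suc (Suc M) \<le> n + 2 * (M div t)"
  shows "\<not> star_arrows (t - 2) t n (Suc (Suc M))"
proof (rule not_star_arrows_if_colour_pairs_large[OF t _ _ _ N])
  show "apex_pair_colour M u v mod t = apex_pair_colour M v u mod t" for u v
    using apex_pair_colour_commute by metis
  show "apex_pair_colour M u v mod t < t" for u v using t by simp
  have each: "M div t \<le> card {u \<in> {..<Suc (Suc M)} - {v}. apex_pair_colour M v u mod t = k}"
    if "v < Suc (Suc M)" "k < t" for v k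
    using div_le_card_residue_class[OF \<open>k < t\<close>, of M]
      card_apex_pair_colour_class_ge[OF M, of v "\<lambda>i. i mod t = k"] that
    by (simp add: lessThan_Suc_atMost)
  fix v k1 k2 assume "v < Suc (Suc M)" "k1 < t" "k2 < t"
  then show "2 * (M div t) \<le> card {u \<in> {..<Suc (Suc M)} - {v}. apex_pair_colour M v u mod t = k1}
      + card {u \<in> {..<Suc (Suc M)} - {v}. apex_pair_colour M v u mod t = k2}"
    using each[of v k1] each[of v k2] by linarith
qed

lemma not_star_arrows_cyclic_distance:
  assumes t: "2 \<le> t" and N: "2 * H + 1 \<le> n + 4 * (H div t)"
  shows "\<not> star_arrows (t - 2) t n (2 * H + 1)"
proof (rule not_star_arrows_if_colour_pairs_large[OF t _ _ _ N])
  let ?N = "2 * H + 1"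
  show "(cyclic_distance ?N u v - 1) mod t = (cyclic_distance ?N v u - 1) mod t" for u v
    using cyclic_distance_commute by metis
  show "(cyclic_distance ?N u v - 1) mod t < t" for u v using t by simp
  have each: "2 * (H div t) \<le> card {u \<in> {..<?N} - {v}. (cyclic_distance ?N v u - 1) mod t = k}"
    if "v < ?N" "k < t" for v k
    using div_le_card_residue_class[OF \<open>k < t\<close>, of H]
      card_cyclic_distance_class_ge[OF refl \<open>v < ?N\<close>, of "\<lambda>i. i mod t = k"] by linarith
  fix v k1 k2 assume "v < ?N" "k1 < t" "k2 < t"
  then show "4 * (H div t) \<le> card {u \<in> {..<?N} - {v}. (cyclic_distance ?N v u - 1) mod t = k1}
      + card {u \<in> {..<?N} - {v}. (cyclic_distance ?N v u - 1) mod t = k2}"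
    using each[of v k1] each[of v k2] by linarith
qed

lemma not_star_arrows_generic:
  assumes n: "n = (t - 2) * a + b + 1" and b: "b < t - 2"
    and not_exceptional: "\<not> (b = 0 \<and> odd a \<and> even t)"
  shows "\<not> star_arrows (t - 2) t n (t * a + b + 1)"
proof -
  have t: "2 \<le> t" and n_eq: "n + 2 * a = t * a + b + 1"
    using b n diff_two_mult_add[of t a] by linarith+
  consider "odd (t * a + b)" | "even (t * a + b)" "0 < b" | "b = 0" "even a"
    using not_exceptional by fastforce
  then show ?thesis
  proof cases
    case 1
    have "(t * a + b) div t = a" using b by simp
    then have "\<not> star_arrows (t - 2) t n (Suc (t * a + b))"
      using not_star_arrows_pair_colour[OF t 1, of "2 * a" n] div_le_card_residue_class[of _ t "t * a + b"]
        n_eq by (simp add: add_mono mult_2)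
    then show ?thesis by simp
  next
    case 2
    have "(t * a + (b - 1)) div t = a" using b by simp
    then show ?thesis
      using not_star_arrows_apex_pair_colour[OF t, of "t * a + (b - 1)" n] 2 n_eq by simp
  next
    case 3
    then obtain h where "a = 2 * h" by blast
    then have "t * a + b + 1 = 2 * (t * h) + 1" "t * h div t = h" using t 3 by simp_all
    then show ?thesis
      using not_star_arrows_cyclic_distance[OF t, of "t * h" n] n_eq \<open>a = 2 * h\<close>
      by (simp add: mult.left_commute)
  qed
qed

lemma not_star_arrows_exceptional:
  assumes n: "n = (t - 2) * a + 1" and t: "2 \<le> t" "even t" and a: "odd a"
  shows "\<not> star_arrows (t - 2) t n (t * a)"
proof -
  define M where "M = t * (a - 1) + (t - 1)"
  have divmod: "(t * q + c) div t = q \<and> (t * q + c) mod t = c" if "c < t" for q c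
    using that by simp
  have "t - 1 < t" using t by simp
  from divmod[OF this, of "a - 1"] have M_div: "M div t = a - 1" and M_mod: "M mod t = t - 1"
    unfolding M_def by simp_all
  have "Suc M = t * a" using t a unfolding M_def by (cases a) auto
  then have "odd M" using t(2) by (metis even_Suc even_mult_iff)
  \<comment> \<open>as \<open>M mod t = t - 1\<close>, every residue class below \<open>M\<close> except the last one has \<open>a\<close> elements\<close>
  have "2 * a - 1 \<le> card {i. i < M \<and> i mod t = k1} + card {i. i < M \<and> i mod t = k2}"
    if "k1 < t" "k2 < t" "k1 \<noteq> k2" for k1 k2
  proof -
    have "a - 1 \<le> card {i. i < M \<and> i mod t = k}" if "k < t" for k
      using div_le_card_residue_class[OF that, of M] M_div by simp
    moreover have "a \<le> card {i. i < M \<and> i mod t = k}" if "k < M mod t" for k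
    proof -
      have "k < t" using that M_mod by linarith
      then show ?thesis using card_residue_class_ge[OF \<open>k < t\<close>, of M] that M_div odd_pos[OF a] by simp
    qed
    moreover have "k1 < M mod t \<or> k2 < M mod t" using that M_mod by linarith
    ultimately show ?thesis using that odd_pos[OF a] by fastforce
  qed
  moreover have "Suc M \<le> n + (2 * a - 1)"
    using \<open>Suc M = t * a\<close> n diff_two_mult_add[OF t(1), of a] odd_pos[OF a] by linarith
  ultimately have "\<not> star_arrows (t - 2) t n (Suc M)"
    by (rule not_star_arrows_pair_colour[OF t(1) \<open>odd M\<close>])
  then show ?thesis using \<open>Suc M = t * a\<close> by simp
qed

lemma ramsey_st_star_generic:
  assumes "n = (t - 2) * a + b + 1" "b < t - 2" "\<not> (b = 0 \<and> odd a \<and> even t)"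
  shows "ramsey_st (t - 2) t (star_V n) (star_E n) = t * a + b + 2"
proof -
  have "star_arrows (t - 2) t n (t * a + b + 2)" "0 < t * a + b + 2"
    using star_arrows_upper[OF assms(1,2)] by simp_all
  note bounds = ramsey_st_star_bounds[OF this not_star_arrows_generic[OF assms]]
  show ?thesis using bounds by linarith
qed

lemma ramsey_st_star_exceptional:
  assumes "n = (t - 2) * a + 1" "2 < t" "even t" "odd a"
  shows "t * a < ramsey_st (t - 2) t (star_V n) (star_E n)"
    and "ramsey_st (t - 2) t (star_V n) (star_E n) \<le> t * a + 2"
proof -
  have "star_arrows (t - 2) t n (t * a + 0 + 2)" "0 < t * a + 0 + 2"
    using star_arrows_upper[of n t a 0] assms(1,2) by simp_all
  moreover have "\<not> star_arrows (t - 2) t n (t * a)"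
    using not_star_arrows_exceptional assms by simp
  ultimately show "t * a < ramsey_st (t - 2) t (star_V n) (star_E n)"
    and "ramsey_st (t - 2) t (star_V n) (star_E n) \<le> t * a + 2"
    using ramsey_st_star_bounds by simp_all
qed

section \<open>Comparison with the closed formula\<close>

lemma times_pred_div_pred:
  fixes m s :: int
  assumes "2 \<le> s"
  shows "(m * s - 1) div (s - 1) = m + (m - 1) div (s - 1)"
proof -
  have eq: "m * s - 1 = (m - 1) + (s - 1) * m" by (simp add: algebra_simps)
  have "(m * s - 1) div (s - 1) = ((m - 1) + (s - 1) * m) div (s - 1)" unfolding eq ..
  also have "\<dots> = m + (m - 1) div (s - 1)" using assms by (subst div_mult_self2) auto
  finally show ?thesis .
qed

lemma int_div_mod_eqI:
  fixes T q r y :: int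
  assumes "y = T * q + r" "0 \<le> r" "r < T"
  shows "y div T = q" "y mod T = r"
  using assms by (simp_all add: add.commute)

lemma int_le_div_iff:
  fixes c p y :: int
  assumes "0 < p"
  shows "c \<le> y div p \<longleftrightarrow> p * c \<le> y"
proof
  assume "c \<le> y div p"
  then have "p * c \<le> p * (y div p)" using assms by simp
  also have "\<dots> \<le> y" using assms by (metis minus_mod_eq_mult_div diff_le_eq le_add_same_cancel1 pos_mod_sign)
  finally show "p * c \<le> y" .
next
  assume "p * c \<le> y"
  then have "p * c div p \<le> y div p" using assms by (intro zdiv_mono1) simp_all
  then show "c \<le> y div p" using assms by simp
qed

lemma residue_ne_even_modulus:
  fixes p a b q r :: int
  assumes p: "1 \<le> p" and b: "0 \<le> b" "b < 2 * p"
    and qr: "(2 * p + 2) * a + b - 1 + b div p = (2 * p + 2) * q + r" "0 \<le> r" "r < 2 * p + 2"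
  shows "r \<noteq> 2 * p"
proof -
  have "0 \<le> b div p" "\<not> 2 \<le> b div p" using p b int_le_div_iff[of p 0 b] int_le_div_iff[of p 2 b] by auto
  then consider "b + b div p = 0" | "1 \<le> b + b div p" "b + b div p - 1 < 2 * p" using b by linarith
  then show ?thesis
  proof cases
    case 1
    then have "(2 * p + 2) * q + r = (2 * p + 2) * (a - 1) + (2 * p + 1)" using qr(1) by (simp add: algebra_simps)
    then have "((2 * p + 2) * q + r) mod (2 * p + 2) = 2 * p + 1"
      by (rule int_div_mod_eqI(2)) (use p in simp_all)
    then show ?thesis using int_div_mod_eqI(2)[OF refl qr(2,3)] by simp
  next
    case 2
    then have "(2 * p + 2) * q + r = (2 * p + 2) * a + (b + b div p - 1)" using qr(1) by (simp add: algebra_simps)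
    then have "((2 * p + 2) * q + r) mod (2 * p + 2) = b + b div p - 1"
      by (rule int_div_mod_eqI(2)) (use 2 in simp_all)
    then show ?thesis using int_div_mod_eqI(2)[OF refl qr(2,3)] 2 by simp
  qed
qed

lemma residue_criterion_of_window:
  fixes p a b q r :: int
  assumes p: "1 \<le> p" and b: "0 \<le> b" "b \<le> 2 * p"
    and qr: "(2 * p + 3) * a + b - 1 + (a + b) div p = (2 * p + 3) * q + r" "0 \<le> r" "r < 2 * p + 3"
    and window: "2 * p \<le> a + b" "a + b < 3 * p"
  shows "1 \<le> r \<and> r \<le> 2 * p + 1 \<and> 2 * q + 2 * r + 7 < 3 * (2 * p + 3) \<and>
    (r = 2 * p + 1 \<or> 2 * p + 3 \<le> q + r + 3)"
proof -
  have "(a + b) div p = 2" using window p int_le_div_iff[of p 2 "a + b"] int_le_div_iff[of p 3 "a + b"] by simp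
  then have eq: "(2 * p + 3) * q + r = (2 * p + 3) * a + (b + 1)" using qr(1) by simp
  have "q = a" "r = b + 1"
    using int_div_mod_eqI[OF eq] int_div_mod_eqI[OF refl qr(2,3)] b by simp_all
  then show ?thesis using window b by simp
qed

lemma window_of_residue_criterion:
  fixes p a b q r :: int
  assumes p: "1 \<le> p" and a: "0 \<le> a" and b: "0 \<le> b" "b \<le> 2 * p"
    and qr: "(2 * p + 3) * a + b - 1 + (a + b) div p = (2 * p + 3) * q + r"
    and r_pos: "1 \<le> r" and r_le: "r \<le> 2 * p + 1" and sum_le: "q + r \<le> 3 * p"
    and r_top: "r = 2 * p + 1 \<or> 2 * p \<le> q + r"
  shows "2 * p \<le> a + b \<and> a + b < 3 * p"
proof -
  define f where "f = (a + b) div p"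
  define k where "k = q - a"
  have f_ge: "c \<le> f \<longleftrightarrow> p * c \<le> a + b" for c
    unfolding f_def using p by (simp add: int_le_div_iff)
  \<comment> \<open>the carry \<open>k\<close> of the digit \<open>b + f - 1\<close> in base \<open>2 p + 3\<close> must vanish\<close>
  have carry: "b + f - 1 = (2 * p + 3) * k + r" using qr unfolding f_def k_def by (simp add: algebra_simps)
  have "0 \<le> f" using f_ge[of 0] a b by simp
  consider "k \<le> -1" | "k = 0" | "1 \<le> k" by linarith
  then show ?thesis
  proof cases
    case 1
    then have "(2 * p + 3) * k \<le> (2 * p + 3) * -1" using p by (intro mult_left_mono) simp_all
    then have "(2 * p + 3) * k \<le> - 2 * p - 3" by simp
    then show ?thesis using carry \<open>0 \<le> f\<close> b r_le by linarith
  next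
    case 2
    then have r_eq: "r = b + f - 1" and "q = a" using carry unfolding k_def by simp_all
    have "\<not> 3 \<le> f"
    proof
      assume "3 \<le> f"
      then have "p * 3 \<le> a + b" using f_ge by blast
      then show False using r_eq \<open>q = a\<close> \<open>3 \<le> f\<close> sum_le by linarith
    qed
    moreover have "\<not> f \<le> 1"
    proof
      assume "f \<le> 1"
      then have "p * 2 \<le> a + b" using r_eq \<open>q = a\<close> b r_top by linarith
      then show False using f_ge[of 2] \<open>f \<le> 1\<close> by simp
    qed
    ultimately have "f = 2" by linarith
    then show ?thesis using f_ge[of 2] f_ge[of 3] by simp
  next
    case 3
    then have "2 * p + 3 \<le> (2 * p + 3) * k" using p by simp
    then have "5 \<le> f" using carry b r_pos by linarith
    then have "p * 5 \<le> a + b" using f_ge by blast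
    then show ?thesis using 3 b r_pos sum_le unfolding k_def by linarith
  qed
qed

lemma residue_criterion_odd_modulus:
  fixes p a b q r :: int
  assumes "1 \<le> p" "0 \<le> a" "0 \<le> b" "b \<le> 2 * p"
    and "(2 * p + 3) * a + b - 1 + (a + b) div p = (2 * p + 3) * q + r" "0 \<le> r" "r < 2 * p + 3"
  shows "2 * p \<le> a + b \<and> a + b < 3 * p \<longleftrightarrow>
    1 \<le> r \<and> r \<le> 2 * p + 1 \<and> 2 * q + 2 * r + 7 < 3 * (2 * p + 3) \<and> (r = 2 * p + 1 \<or> 2 * p + 3 \<le> q + r + 3)"
proof
  assume "2 * p \<le> a + b \<and> a + b < 3 * p"
  then show "1 \<le> r \<and> r \<le> 2 * p + 1 \<and> 2 * q + 2 * r + 7 < 3 * (2 * p + 3) \<and>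
      (r = 2 * p + 1 \<or> 2 * p + 3 \<le> q + r + 3)"
    using residue_criterion_of_window[OF assms(1,3-7)] by blast
next
  assume "1 \<le> r \<and> r \<le> 2 * p + 1 \<and> 2 * q + 2 * r + 7 < 3 * (2 * p + 3) \<and>
      (r = 2 * p + 1 \<or> 2 * p + 3 \<le> q + r + 3)"
  then show "2 * p \<le> a + b \<and> a + b < 3 * p"
    using window_of_residue_criterion[OF assms(1-5)] by auto
qed

lemma star_size_decomposition:
  fixes t n :: nat
  assumes "3 \<le> t" "1 \<le> n"
  obtains a b where "n = (t - 2) * a + b + 1" "b < t - 2"
proof
  show "n = (t - 2) * ((n - 1) div (t - 2)) + (n - 1) mod (t - 2) + 1" using assms(2) by simp
  show "(n - 1) mod (t - 2) < t - 2" using assms(1) by simp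
qed

lemma ramsey_st_star_even:
  fixes t n :: nat and t' x q r :: int
  assumes t: "4 \<le> t" "even t" and n: "1 \<le> n" and t': "t' = int t div 2"
    and x: "x = (int n * t' - 1) div (t' - 1)"
    and qr: "x - 2 = int t * q + r" "0 \<le> r" "r \<le> int t - 1"
  shows "int (ramsey_st (t - 2) t (star_V n) (star_E n)) \<noteq> x - 1" and "r \<noteq> int t - 2"
proof -
  have "3 \<le> t" using t by simp
  then obtain a b where nab: "n = (t - 2) * a + b + 1" "b < t - 2"
    using star_size_decomposition n by blast
  define p where "p = t' - 1"
  have p: "1 \<le> p" "int t = 2 * p + 2" using t t' unfolding p_def by auto
  have "int n - 1 = 2 * p * int a + int b" using nab t p by (simp add: of_nat_diff)
  moreover have "x = int n + (int n - 1) div p" using times_pred_div_pred x t' t unfolding p_def by simp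
  moreover have "(2 * p * int a + int b) div p = 2 * int a + int b div p"
    using p by (simp add: mult.commute mult.left_commute)
  ultimately have x_ab: "x = int t * int a + int b + 1 + int b div p" using p by (simp add: algebra_simps)
  have "int b < p * 2" "0 \<le> int b" using nab p by linarith+
  then have "int b div p \<le> 1" using p int_le_div_iff[of p 2 "int b"] by auto
  show "r \<noteq> int t - 2"
    using residue_ne_even_modulus[OF p(1) \<open>0 \<le> int b\<close>, of "int a" q r] x_ab qr p \<open>int b < p * 2\<close>
    by (simp add: algebra_simps)
  show "int (ramsey_st (t - 2) t (star_V n) (star_E n)) \<noteq> x - 1"
  proof (cases "b = 0 \<and> odd a")
    case True
    then have "x - 1 = int (t * a)" using x_ab by simp
    moreover have "t * a < ramsey_st (t - 2) t (star_V n) (star_E n)"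
      using ramsey_st_star_exceptional(1)[of n t a] nab t True by simp
    ultimately show ?thesis by (metis less_irrefl of_nat_eq_iff)
  next
    case False
    then show ?thesis using ramsey_st_star_generic[OF nab] x_ab \<open>int b div p \<le> 1\<close> t by simp
  qed
qed

lemma ramsey_st_star_odd:
  fixes t n :: nat and t' x q r :: int
  assumes t: "4 \<le> t" "odd t" and n: "1 \<le> n" and t': "t' = int t div 2"
    and x: "x = (int n * t' - 1) div (t' - 1)"
    and qr: "x - 2 = int t * q + r" "0 \<le> r" "r \<le> int t - 1"
  shows "int (ramsey_st (t - 2) t (star_V n) (star_E n)) = x - 1 \<longleftrightarrow>
    1 \<le> r \<and> r \<le> int t - 2 \<and> 2 * q + 2 * r + 7 < 3 * int t \<and> (r = int t - 2 \<or> int t \<le> q + r + 3)"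
proof -
  have "3 \<le> t" using t by simp
  then obtain a b where nab: "n = (t - 2) * a + b + 1" "b < t - 2"
    using star_size_decomposition n by blast
  define p where "p = t' - 1"
  have p: "1 \<le> p" "int t = 2 * p + 3" using t t' unfolding p_def by (auto elim!: oddE)
  have "int n - 1 = (2 * p + 1) * int a + int b" using nab t p by (simp add: of_nat_diff)
  moreover have "x = int n + (int n - 1) div p" using times_pred_div_pred x t' t unfolding p_def by simp
  moreover have "((2 * p + 1) * int a + int b) div p = 2 * int a + (int a + int b) div p"
  proof -
    have eq: "(2 * p + 1) * int a + int b = (int a + int b) + p * (2 * int a)"
      by (simp add: algebra_simps)
    show ?thesis unfolding eq using p by simp
  qed
  ultimately have x_ab: "x = int t * int a + int b + 1 + (int a + int b) div p"
    using p by (simp add: algebra_simps)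
  have "int (ramsey_st (t - 2) t (star_V n) (star_E n)) = int t * int a + int b + 2"
    using ramsey_st_star_generic[OF nab] t by simp
  then have "int (ramsey_st (t - 2) t (star_V n) (star_E n)) = x - 1 \<longleftrightarrow>
      2 * p \<le> int a + int b \<and> int a + int b < 3 * p"
    using x_ab p int_le_div_iff[of p 2 "int a + int b"] int_le_div_iff[of p 3 "int a + int b"] by auto
  also have "\<dots> \<longleftrightarrow> 1 \<le> r \<and> r \<le> 2 * p + 1 \<and> 2 * q + 2 * r + 7 < 3 * (2 * p + 3) \<and>
      (r = 2 * p + 1 \<or> 2 * p + 3 \<le> q + r + 3)"
    using nab p x_ab qr by (intro residue_criterion_odd_modulus) (simp_all add: algebra_simps)
  finally show ?thesis using p by (simp add: ac_simps)
qed

theorem theorem7: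
  fixes t n :: nat and t' x q r :: int
  assumes "t \<ge> 4" and "n \<ge> 1"
    and "t' = int t div 2"
    and "x = (int n * t' - 1) div (t' - 1)"
    and "x - 2 = int t * q + r" and "0 \<le> r" and "r \<le> int t - 1"
  shows "int (ramsey_st (t - 2) t (star_V n) (star_E n)) = x - 1 \<longleftrightarrow>
    ((r = 1 \<and> 2 * q + 9 < 3 * int t \<and> int t \<le> q + 4 \<and> odd t \<and> even x) \<or>
     (r = 1 \<and> 2 * q + 9 < 3 * int t \<and> int t \<le> q + 4 \<and> odd t \<and> odd x) \<or>
     (1 < r \<and> r < int t - 2 \<and> 2 * q + 2 * r + 7 < 3 * int t \<and> int t \<le> q + r + 3 \<and> odd t) \<or>
     (r = int t - 2 \<and> (even t \<or> (odd t \<and> 2 * q + 2 * r + 7 < 3 * int t))))"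
proof (cases "even t")
  case True
  then show ?thesis using ramsey_st_star_even[OF assms(1) True assms(2-7)] by auto
next
  case False
  then show ?thesis using ramsey_st_star_odd[OF assms(1) False assms(2-7)] assms(1) by auto
qed

end
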